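(* Let $\mathbb{X}$ be a Banach space and $\delta>0$. Suppose $V\subset\mathbb{X}$ is a $\delta$-separated set with $\#V\geq2$ and there exist a line $L$ and a number $0\leq\alpha<1/8$ such that $\mathrm{dist}(x,L)\leq\alpha\delta$ for all $x\in V$. Let $\pi_L$ be any metric projection onto $L$ and let $\Pi_L$ be any $J$-projection onto $L$. Then there is an identification of $L$ with $\mathbb{R}$ (via an affine isometry) such that for all $x,y\in V$, $\pi_L(x)\leq\pi_L(y)$ if and only if $\Pi_L(x)\leq\Pi_L(y)$.
   Context: All Banach spaces are real; a line is a one-dimensional affine subspace. $V$ is $\delta$-separated if $|v-w|\geq\delta$ for distinct $v,w\in V$. A metric projection onto $L$ is any map $\pi_L:\mathbb{X}\to L$ with $|x-\pi_L(x)|=\mathrm{dist}(x,L)$. A normalized duality mapping is any (possibly nonlinear) map $J:\mathbb{X}\to\mathbb{X}^*$ with $|J(x)|_{\mathbb{X}^*}=|x|$ and $\langle J(x),x\rangle=|x|^2$ for all $x$. If $L$ is a one-dimensional linear subspace, the $J$-projection onto $L$ is $\Pi_L(x)=\langle J(v),x\rangle v$ where $v\in L$ with $|v|=1$ is fixed; for an affine line $L$ and any $q\in L$, $\Pi_L(x)=q+\Pi_{L-q}(x-q)$. *)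

theory Defs
  imports "HOL-Analysis.Analysis"
begin

definition is_line :: "'a::real_normed_vector set \<Rightarrow> bool" where
  "is_line L \<longleftrightarrow> (\<exists>q v. v \<noteq> 0 \<and> L = {q + t *\<^sub>R v | t. True})"

definition delta_separated :: "real \<Rightarrow> 'a::metric_space set \<Rightarrow> bool" where
  "delta_separated \<delta> V \<longleftrightarrow> (\<forall>v\<in>V. \<forall>w\<in>V. v \<noteq> w \<longrightarrow> dist v w \<ge> \<delta>)"

definition metric_projection :: "'a::real_normed_vector set \<Rightarrow> ('a \<Rightarrow> 'a) \<Rightarrow> bool" where
  "metric_projection L p \<longleftrightarrow> (\<forall>x. p x \<in> L \<and> norm (x - p x) = infdist x L)"

definition duality_mapping :: "('a::real_normed_vector \<Rightarrow> ('a \<Rightarrow>\<^sub>L real)) \<Rightarrow> bool" where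
  "duality_mapping J \<longleftrightarrow> (\<forall>x. norm (J x) = norm x \<and> blinfun_apply (J x) x = (norm x)\<^sup>2)"

definition J_projection :: "('a::real_normed_vector \<Rightarrow> ('a \<Rightarrow>\<^sub>L real)) \<Rightarrow> 'a \<Rightarrow> 'a \<Rightarrow> 'a \<Rightarrow> 'a" where
  "J_projection J q v x = q + (blinfun_apply (J v) (x - q)) *\<^sub>R v"

definition is_J_projection :: "'a::real_normed_vector set \<Rightarrow> ('a \<Rightarrow> 'a) \<Rightarrow> bool" where
  "is_J_projection L P \<longleftrightarrow> (\<exists>J q v. duality_mapping J \<and> q \<in> L \<and> q + v \<in> L \<and> norm v = 1
      \<and> P = J_projection J q v)"

end

theory Submission
  imports Defs
begin

text \<open>Use the coordinate \<open>\<phi> x = J v (x - q)\<close> given by the J-projection itself: it is an isometry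
  of \<open>L\<close> onto \<open>\<real>\<close>, it is unchanged by \<open>\<Pi>\<^sub>L\<close>, and it is 1-Lipschitz on the whole space since
  \<open>\<parallel>J v\<parallel> = 1\<close>. Hence \<open>\<phi> x\<close> and \<open>\<phi> (\<pi>\<^sub>L x)\<close> differ by at most \<open>\<alpha>\<delta>\<close>, while the metric projections of
  distinct points of \<open>V\<close> are at least \<open>(1 - 2\<alpha>)\<delta> > 2\<alpha>\<delta>\<close> apart; so the two orders on \<open>V\<close> agree.\<close>

lemma line_eq_range_through:
  assumes "is_line L" "q \<in> L" "q + v \<in> L" "v \<noteq> 0"
  shows "L = range (\<lambda>t. q + t *\<^sub>R v)"
proof -
  obtain q0 w where L: "L = {q0 + t *\<^sub>R w | t. True}"
    using assms(1) unfolding is_line_def by blast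
  obtain a b where a: "q = q0 + a *\<^sub>R w" and b: "q + v = q0 + b *\<^sub>R w"
    using assms(2,3) L by blast
  have v: "v = (b - a) *\<^sub>R w" using a b by (simp add: algebra_simps)
  with assms(4) have ba: "b \<noteq> a" by auto
  have param: "q + c *\<^sub>R v = q0 + (a + c * (b - a)) *\<^sub>R w" for c
    unfolding a v by (simp add: algebra_simps)
  show ?thesis
  proof (intro set_eqI iffI)
    fix x assume "x \<in> L"
    then obtain t where "x = q0 + t *\<^sub>R w" using L by blast
    also have "\<dots> = q + ((t - a) / (b - a)) *\<^sub>R v" using ba by (simp add: param)
    finally show "x \<in> range (\<lambda>t. q + t *\<^sub>R v)" by blast
  next
    fix x assume "x \<in> range (\<lambda>t. q + t *\<^sub>R v)"
    then show "x \<in> L" using L param by blast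
  qed
qed

lemma duality_mapping_unit:
  fixes J :: "'a::real_normed_vector \<Rightarrow> 'a \<Rightarrow>\<^sub>L real"
  assumes "duality_mapping J" "norm v = 1"
  shows "norm (J v) = 1" "J v v = 1"
  using assms unfolding duality_mapping_def by simp_all

lemma isometric_coordinate_of_line:
  fixes \<phi> :: "'a::real_normed_vector \<Rightarrow> real"
  assumes "norm v = 1" "\<And>t. \<phi> (q + t *\<^sub>R v) = t"
  shows "\<forall>a\<in>range (\<lambda>t. q + t *\<^sub>R v). \<forall>b\<in>range (\<lambda>t. q + t *\<^sub>R v). \<bar>\<phi> a - \<phi> b\<bar> = dist a b"
    and "\<phi> ` range (\<lambda>t. q + t *\<^sub>R v) = UNIV"
proof -
  have "dist (q + s *\<^sub>R v) (q + t *\<^sub>R v) = \<bar>s - t\<bar>" for s t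
  proof -
    have "dist (q + s *\<^sub>R v) (q + t *\<^sub>R v) = norm ((s - t) *\<^sub>R v)"
      by (simp add: dist_norm algebra_simps)
    then show ?thesis using assms(1) by simp
  qed
  then show "\<forall>a\<in>range (\<lambda>t. q + t *\<^sub>R v). \<forall>b\<in>range (\<lambda>t. q + t *\<^sub>R v). \<bar>\<phi> a - \<phi> b\<bar> = dist a b"
    using assms(2) by auto
  show "\<phi> ` range (\<lambda>t. q + t *\<^sub>R v) = UNIV"
    using assms(2) by (metis (no_types, lifting) UNIV_eq_I image_eqI rangeI)
qed

lemma coordinate_J_projection:
  fixes J :: "'a::real_normed_vector \<Rightarrow> 'a \<Rightarrow>\<^sub>L real"
  assumes "J v v = 1"
  shows "J v (J_projection J q v x - q) = J v (x - q)"
  using assms by (simp add: J_projection_def blinfun.scaleR_right)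

lemma blinfun_diff_le_norm:
  fixes f :: "'a::real_normed_vector \<Rightarrow>\<^sub>L real"
  assumes "norm f \<le> 1"
  shows "\<bar>blinfun_apply f (x - q) - f (y - q)\<bar> \<le> norm (x - y)"
proof -
  have "\<bar>f (x - q) - f (y - q)\<bar> = \<bar>f (x - y)\<bar>" by (simp add: blinfun.diff_right)
  also have "\<dots> \<le> norm f * norm (x - y)" using norm_blinfun[of f "x - y"] by simp
  also have "\<dots> \<le> norm (x - y)" using assms by (simp add: mult_left_le_one_le)
  finally show ?thesis .
qed

lemma metric_projection_separated:
  assumes "metric_projection L p" "delta_separated \<delta> V"
    and "\<forall>x\<in>V. infdist x L \<le> \<epsilon>" "x \<in> V" "y \<in> V" "x \<noteq> y"
  shows "dist (p x) (p y) \<ge> \<delta> - 2 * \<epsilon>"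
proof -
  have "dist x (p x) \<le> \<epsilon>" "dist y (p y) \<le> \<epsilon>"
    using assms(1,3-5) unfolding metric_projection_def dist_norm by metis+
  moreover have "dist x y \<ge> \<delta>"
    using assms(2,4-6) unfolding delta_separated_def by blast
  moreover have "dist x y \<le> dist x (p x) + dist (p x) (p y) + dist y (p y)"
    by (metis dist_commute dist_triangle add_mono order_trans order_refl)
  ultimately show ?thesis by linarith
qed

lemma le_iff_le_of_close:
  fixes u u' s s' e :: real
  assumes "2 * e < \<bar>u - u'\<bar>" "\<bar>s - u\<bar> \<le> e" "\<bar>s' - u'\<bar> \<le> e"
  shows "u \<le> u' \<longleftrightarrow> s \<le> s'"
  using assms by linarith

theorem mainTheorem12:
  fixes V L :: "'a::banach set" and \<delta> \<alpha> :: real and pm PJ :: "'a \<Rightarrow> 'a"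
  assumes "\<delta> > 0"
    and "delta_separated \<delta> V"
    and "\<exists>a\<in>V. \<exists>b\<in>V. a \<noteq> b"
    and "is_line L"
    and "0 \<le> \<alpha>" and "\<alpha> < 1/8"
    and "\<forall>x\<in>V. infdist x L \<le> \<alpha> * \<delta>"
    and "metric_projection L pm"
    and "is_J_projection L PJ"
  shows "\<exists>\<phi> :: 'a \<Rightarrow> real.
           (\<forall>a\<in>L. \<forall>b\<in>L. \<bar>\<phi> a - \<phi> b\<bar> = dist a b) \<and> \<phi> ` L = UNIV \<and>
           (\<forall>x\<in>V. \<forall>y\<in>V. \<phi> (pm x) \<le> \<phi> (pm y) \<longleftrightarrow> \<phi> (PJ x) \<le> \<phi> (PJ y))"
proof -
  obtain J q v where J: "duality_mapping J" and "q \<in> L" "q + v \<in> L"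
    and v: "norm v = 1" and PJ: "PJ = J_projection J q v"
    using assms(9) unfolding is_J_projection_def by blast
  then have L: "L = range (\<lambda>t. q + t *\<^sub>R v)"
    using assms(4) line_eq_range_through by fastforce
  define \<phi> where "\<phi> x = J v (x - q)" for x
  have Jv: "norm (J v) = 1" "J v v = 1" using duality_mapping_unit[OF J v] by simp_all
  then have "\<phi> (q + t *\<^sub>R v) = t" for t by (simp add: \<phi>_def blinfun.scaleR_right)
  note coordinate = isometric_coordinate_of_line[OF v this, folded L]
  have close: "\<bar>\<phi> (PJ z) - \<phi> (pm z)\<bar> \<le> \<alpha> * \<delta>" if "z \<in> V" for z
  proof -
    have "norm (z - pm z) \<le> \<alpha> * \<delta>"
      using assms(7,8) that unfolding metric_projection_def by metis
    then show ?thesis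
      using blinfun_diff_le_norm[of "J v" z q "pm z"] Jv
      unfolding PJ \<phi>_def coordinate_J_projection[of J v, OF Jv(2)] by linarith
  qed
  have "\<phi> (pm x) \<le> \<phi> (pm y) \<longleftrightarrow> \<phi> (PJ x) \<le> \<phi> (PJ y)" if "x \<in> V" "y \<in> V" "x \<noteq> y" for x y
  proof (rule le_iff_le_of_close[OF _ close close])
    have "dist (pm x) (pm y) \<ge> \<delta> - 2 * (\<alpha> * \<delta>)"
      using metric_projection_separated assms(2,7,8) that by blast
    moreover have "pm x \<in> L" "pm y \<in> L" using assms(8) unfolding metric_projection_def by blast+
    moreover have "4 * (\<alpha> * \<delta>) < \<delta>" using assms(1,6) by simp
    ultimately show "2 * (\<alpha> * \<delta>) < \<bar>\<phi> (pm x) - \<phi> (pm y)\<bar>"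
      using coordinate(1) by fastforce
  qed (use that in auto)
  then show ?thesis using coordinate by (metis order_refl)
qed

end
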